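(* Let $\Sigma^*$ be an $n\times n$ positive definite matrix with $\Omega^*=(\Sigma^* )^{-1}$ whose conditional independence structure is a tree $T^*$, let $\mathcal{L}$ be the set of leaves of $T^*$, let $D^*$ be a diagonal matrix with nonnegative entries satisfying $D^*_{aa}<1/\Omega^*_{aa}$ for all $a\in\mathcal{L}$, and let $\Sigma^o=\Sigma^*+D^*$. Then for every decomposition $\Sigma^o=\Sigma'+D'$ in which $\Sigma'$ is positive definite with conditional independence structure a tree $T'$, and $D'$ is diagonal with nonnegative entries satisfying $D'_{aa}<1/\Omega^*_{aa}$ for all $a\in\mathcal{L}$, we have $T'=T^*$.
   Context: For an $n\times n$ positive definite matrix $\Sigma$ with inverse $\Omega$, its conditional independence structure is the graph on $\{1,\dots,n\}$ with an edge $\{i,j\}$ ($i\neq j$) iff $\Omega_{ij}\neq 0$. *)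

theory Defs
  imports "HOL-Analysis.Analysis"
begin

text \<open>Matrices are n x n real matrices indexed by a finite type 'n (vertex set {1..n} = UNIV).\<close>

definition pos_def :: "real^'n^'n \<Rightarrow> bool" where
  "pos_def A \<longleftrightarrow> transpose A = A \<and> (\<forall>x::real^'n. x \<noteq> 0 \<longrightarrow> x \<bullet> (A *v x) > 0)"

definition diag_mat :: "real^'n^'n \<Rightarrow> bool" where
  "diag_mat D \<longleftrightarrow> (\<forall>i j. i \<noteq> j \<longrightarrow> D $ i $ j = 0)"

definition ci_graph :: "real^'n^'n \<Rightarrow> 'n \<Rightarrow> 'n \<Rightarrow> bool" where
  "ci_graph S i j \<longleftrightarrow> i \<noteq> j \<and> matrix_inv S $ i $ j \<noteq> 0"

definition connected_graph :: "('a::finite \<Rightarrow> 'a \<Rightarrow> bool) \<Rightarrow> bool" where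
  "connected_graph E \<longleftrightarrow> (\<forall>u v. E\<^sup>*\<^sup>* u v)"

definition has_cycle :: "('a \<Rightarrow> 'a \<Rightarrow> bool) \<Rightarrow> bool" where
  "has_cycle E \<longleftrightarrow> (\<exists>vs. length vs \<ge> 3 \<and> distinct vs \<and>
      (\<forall>k. Suc k < length vs \<longrightarrow> E (vs ! k) (vs ! Suc k)) \<and> E (last vs) (hd vs))"

definition is_tree :: "('a::finite \<Rightarrow> 'a \<Rightarrow> bool) \<Rightarrow> bool" where
  "is_tree E \<longleftrightarrow> connected_graph E \<and> \<not> has_cycle E"

definition leaves :: "('a::finite \<Rightarrow> 'a \<Rightarrow> bool) \<Rightarrow> 'a set" where
  "leaves E = {a. card {b. E a b} = 1}"

end

theory Submission
  imports Defs
begin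

(* Let S be positive definite with precision matrix Omega = S^-1 whose support is a tree T. If j
   separates i from k in T then S_ik S_jj = S_ij S_jk (the Markov property); otherwise, by induction
   along the path from j towards i, |S_ij S_jk| < S_jj |S_ik|, all entries of S being nonzero.
   Since D* and D' are diagonal, S* and S' share their off-diagonal entries. Hence if j separates
   two vertices in T*, then S*_jj <= S'_jj, and symmetrically for T'. A leaf j of T* with neighbour b
   separates no two vertices in T': otherwise S'_jj <= (S*_jb)^2 / S*_bb = S*_jj - 1/Omega*_jj,
   so D'_jj >= S*_jj - S'_jj >= 1/Omega*_jj. It follows that T* and T' have the same inner
   vertices, that S* and S' agree there, and hence that both trees have the same separation
   relation, which determines a tree: its edges are the pairs separated by no vertex. *)

section \<open>Positive definite matrices\<close>

lemma pos_def_sym: "pos_def S \<Longrightarrow> S $ i $ j = S $ j $ i"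
  unfolding pos_def_def by (metis transpose_def vec_lambda_beta)

lemma pos_def_mult_matrix_inv:
  fixes S :: "real^'n^'n"
  assumes "pos_def S"
  shows "S ** matrix_inv S = mat 1" and "matrix_inv S ** S = mat 1"
proof -
  have "x = 0" if "S *v x = 0" for x
    using assms that unfolding pos_def_def by force
  then have "invertible S"
    using matrix_left_invertible_ker invertible_left_inverse by blast
  then have "S ** matrix_inv S = mat 1 \<and> matrix_inv S ** S = mat 1"
    unfolding invertible_def matrix_inv_def by (rule someI_ex)
  then show "S ** matrix_inv S = mat 1" and "matrix_inv S ** S = mat 1" by auto
qed

lemma pos_def_matrix_inv:
  fixes S :: "real^'n^'n"
  assumes "pos_def S"
  shows "pos_def (matrix_inv S)"
  unfolding pos_def_def
proof (intro conjI allI impI)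
  have "transpose S = S" using assms unfolding pos_def_def by blast
  then have "transpose (matrix_inv S) ** S = mat 1"
    by (metis matrix_transpose_mul pos_def_mult_matrix_inv(1)[OF assms] transpose_mat)
  then show "transpose (matrix_inv S) = matrix_inv S"
    by (metis matrix_mul_assoc matrix_mul_lid matrix_mul_rid pos_def_mult_matrix_inv(1)[OF assms])
next
  fix x :: "real^'n" assume "x \<noteq> 0"
  define y where "y = matrix_inv S *v x"
  have "S *v y = x"
    by (simp add: y_def matrix_vector_mul_assoc pos_def_mult_matrix_inv(1)[OF assms])
  then have "y \<noteq> 0" using \<open>x \<noteq> 0\<close> by auto
  then have "y \<bullet> (S *v y) > 0" using assms unfolding pos_def_def by blast
  then show "x \<bullet> (matrix_inv S *v x) > 0" using \<open>S *v y = x\<close> by (simp add: y_def inner_commute)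
qed

lemma pos_def_diag_pos:
  assumes "pos_def S"
  shows "S $ i $ i > 0"
proof -
  have "axis i 1 \<bullet> (S *v axis i 1) > 0"
    using assms unfolding pos_def_def by simp
  then show ?thesis by (simp add: inner_axis' matrix_vector_mult_basis column_def)
qed

lemma pos_def_offdiag_sq_less:
  fixes S :: "real^'n^'n"
  assumes "pos_def S" "i \<noteq> j"
  shows "(S $ i $ j)^2 < S $ i $ i * S $ j $ j"
proof -
  define x :: "real^'n" where "x = S$j$j *\<^sub>R axis i 1 - S$i$j *\<^sub>R axis j 1"
  have "x $ i = S$j$j" using assms(2) by (simp add: x_def axis_def)
  then have "x \<noteq> 0" using pos_def_diag_pos[OF assms(1), of j] by auto
  then have "x \<bullet> (S *v x) > 0" using assms(1) unfolding pos_def_def by blast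
  also have "x \<bullet> (S *v x) = S$j$j * (S$i$i * S$j$j - (S$i$j)^2)"
    using pos_def_sym[OF assms(1), of j i]
    by (simp add: x_def matrix_vector_mult_basis column_def inner_axis' algebra_simps power2_eq_square)
  finally show ?thesis using pos_def_diag_pos[OF assms(1), of j] by (simp add: zero_less_mult_iff)
qed

lemma pos_def_restriction_eq_0:
  fixes M :: "real^'n^'n"
  assumes "pos_def M"
    and "\<And>x. x \<in> A \<Longrightarrow> (M *v u) $ x = 0"
    and "\<And>x y. x \<in> A \<Longrightarrow> y \<notin> A \<Longrightarrow> M $ x $ y * u $ y = 0"
    and "x \<in> A"
  shows "u $ x = 0"
proof -
  define v :: "real^'n" where "v = (\<chi> y. if y \<in> A then u $ y else 0)"
  have "(M *v v) $ x = (M *v u) $ x" if "x \<in> A" for x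
    unfolding matrix_vector_mult_def v_def using assms(3)[OF that] by (auto intro: sum.cong)
  then have "v \<bullet> (M *v v) = 0"
    unfolding inner_vec_def using assms(2) by (auto simp: v_def intro: sum.neutral)
  then have "v = 0" using assms(1) unfolding pos_def_def by force
  moreover have "v $ x = u $ x" using assms(4) by (simp add: v_def)
  ultimately show ?thesis by simp
qed

section \<open>Branches and separation in graphs\<close>

definition delete_vertex :: "('a \<Rightarrow> 'a \<Rightarrow> bool) \<Rightarrow> 'a \<Rightarrow> 'a \<Rightarrow> 'a \<Rightarrow> bool" where
  "delete_vertex E j x y \<longleftrightarrow> E x y \<and> x \<noteq> j \<and> y \<noteq> j"

definition delete_edge :: "('a \<Rightarrow> 'a \<Rightarrow> bool) \<Rightarrow> 'a \<Rightarrow> 'a \<Rightarrow> 'a \<Rightarrow> 'a \<Rightarrow> bool" where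
  "delete_edge E a b x y \<longleftrightarrow> E x y \<and> {x, y} \<noteq> {a, b}"

definition branch :: "('a \<Rightarrow> 'a \<Rightarrow> bool) \<Rightarrow> 'a \<Rightarrow> 'a \<Rightarrow> 'a set" where
  "branch E j i = {x. (delete_vertex E j)\<^sup>*\<^sup>* i x}"

definition separates :: "('a \<Rightarrow> 'a \<Rightarrow> bool) \<Rightarrow> 'a \<Rightarrow> 'a \<Rightarrow> 'a \<Rightarrow> bool" where
  "separates E j i k \<longleftrightarrow> i \<noteq> j \<and> k \<noteq> j \<and> k \<notin> branch E j i"

definition inner_vertex :: "('a \<Rightarrow> 'a \<Rightarrow> bool) \<Rightarrow> 'a \<Rightarrow> bool" where
  "inner_vertex E j \<longleftrightarrow> (\<exists>i k. separates E j i k)"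

lemma self_in_branch [simp]: "i \<in> branch E j i"
  by (simp add: branch_def)

lemma center_notin_branch:
  assumes "i \<noteq> j"
  shows "j \<notin> branch E j i"
proof -
  have "(delete_vertex E j)\<^sup>*\<^sup>* i x \<Longrightarrow> x \<noteq> j" for x
    by (induction rule: rtranclp_induct) (use assms in \<open>auto simp: delete_vertex_def\<close>)
  then show ?thesis by (auto simp: branch_def)
qed

lemma branch_closed:
  assumes "i \<noteq> j" "x \<in> branch E j i" "E x y" "y \<noteq> j"
  shows "y \<in> branch E j i"
proof -
  have "x \<noteq> j" using assms(1,2) center_notin_branch by metis
  then have "delete_vertex E j x y" using assms(3,4) by (simp add: delete_vertex_def)
  then show ?thesis using assms(2) by (simp add: branch_def rtranclp.rtrancl_into_rtrancl)
qed

lemma branch_eq: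
  assumes "symp E" "x \<in> branch E j i"
  shows "branch E j x = branch E j i"
proof -
  have "symp (delete_vertex E j)"
    using assms(1) by (auto simp: symp_def delete_vertex_def)
  then have "(delete_vertex E j)\<^sup>*\<^sup>* x i"
    using assms(2) symp_rtranclp by (auto simp: branch_def dest: sympD)
  then show ?thesis
    using assms(2) by (auto simp: branch_def intro: rtranclp_trans)
qed

lemma branch_subset:
  assumes "j \<notin> branch E m i"
  shows "branch E m i \<subseteq> branch E j i"
proof
  fix y assume "y \<in> branch E m i"
  then have "(delete_vertex E m)\<^sup>*\<^sup>* i y" by (simp add: branch_def)
  then show "y \<in> branch E j i"
  proof (induction rule: rtranclp_induct)
    case (step x y)
    then have "x \<in> branch E m i" "y \<in> branch E m i"
      by (simp_all add: branch_def rtranclp.rtrancl_into_rtrancl)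
    then have "delete_vertex E j x y"
      using assms step(2) by (auto simp: delete_vertex_def)
    then show ?case using step(3) by (simp add: branch_def rtranclp.rtrancl_into_rtrancl)
  qed simp
qed

lemma branch_neighbour:
  assumes "E\<^sup>*\<^sup>* i j" "i \<noteq> j"
  shows "\<exists>m \<in> branch E j i. E m j"
proof -
  have "x \<in> branch E j i \<or> (\<exists>m \<in> branch E j i. E m j)" if "E\<^sup>*\<^sup>* i x" for x
    using that
  proof (induction rule: rtranclp_induct)
    case (step x y)
    show ?case
    proof (cases "x \<in> branch E j i \<and> y \<noteq> j")
      case True
      then show ?thesis using branch_closed[OF assms(2)] step(2) by blast
    qed (use step in blast)
  qed simp
  moreover have "j \<notin> branch E j i" using assms(2) by (rule center_notin_branch)
  ultimately show ?thesis using assms(1) by blast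
qed

lemma leaf_separates:
  assumes "\<And>y. E j y \<Longrightarrow> y = b" "j \<noteq> b" "x \<noteq> j" "x \<noteq> b"
  shows "separates E b j x"
proof -
  have "(delete_vertex E b)\<^sup>*\<^sup>* j x \<Longrightarrow> x = j" for x
    by (induction rule: rtranclp_induct) (use assms(1) in \<open>auto simp: delete_vertex_def\<close>)
  then show ?thesis using assms(2-4) by (auto simp: separates_def branch_def)
qed

lemma adjacent_not_separated: "E i k \<Longrightarrow> \<not> separates E j i k"
  unfolding separates_def using branch_closed[of i j i E k] by auto

lemma rtranclp_distinct_path:
  assumes "R\<^sup>*\<^sup>* x y"
  shows "\<exists>vs. vs \<noteq> [] \<and> hd vs = x \<and> last vs = y \<and> distinct vs \<and>
            (\<forall>k. Suc k < length vs \<longrightarrow> R (vs ! k) (vs ! Suc k))"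
  using assms
proof (induction rule: converse_rtranclp_induct)
  case base
  then show ?case by (intro exI[of _ "[y]"]) simp
next
  case (step x z)
  then obtain vs where vs: "vs \<noteq> []" "hd vs = z" "last vs = y" "distinct vs"
     "\<forall>k. Suc k < length vs \<longrightarrow> R (vs ! k) (vs ! Suc k)" by blast
  show ?case
  proof (cases "x \<in> set vs")
    case False
    show ?thesis
    proof (intro exI[of _ "x # vs"] conjI allI impI)
      fix k assume "Suc k < length (x # vs)"
      then show "R ((x # vs) ! k) ((x # vs) ! Suc k)"
        using vs step(1) by (cases k) (auto simp: hd_conv_nth)
    qed (use vs False in auto)
  next
    case True
    then obtain p where p: "p < length vs" "vs ! p = x" by (auto simp: in_set_conv_nth)
    show ?thesis
    proof (intro exI[of _ "drop p vs"] conjI allI impI)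
      fix k assume "Suc k < length (drop p vs)"
      then show "R (drop p vs ! k) (drop p vs ! Suc k)"
        using vs(5)[rule_format, of "p + k"] p by auto
    qed (use vs p in \<open>auto simp: hd_drop_conv_nth\<close>)
  qed
qed

lemma acyclic_bridge:
  assumes "symp E" "\<not> has_cycle E" "E a b" "a \<noteq> b"
  shows "\<not> (delete_edge E a b)\<^sup>*\<^sup>* a b"
proof
  assume "(delete_edge E a b)\<^sup>*\<^sup>* a b"
  from rtranclp_distinct_path[OF this] obtain vs where vs: "vs \<noteq> []" "hd vs = a" "last vs = b" "distinct vs"
     "\<forall>k. Suc k < length vs \<longrightarrow> delete_edge E a b (vs ! k) (vs ! Suc k)"
    by blast
  have "length vs \<noteq> 1" using vs(1-3) assms(4) by (cases vs) auto
  moreover have "length vs \<noteq> 2"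
  proof
    assume "length vs = 2"
    then obtain x y where "vs = [x, y]"
      by (metis length_0_conv length_Suc_conv numeral_2_eq_2)
    then show False using vs(2,3) vs(5)[rule_format, of 0] by (simp add: delete_edge_def)
  qed
  moreover have "length vs \<noteq> 0" using vs(1) by simp
  ultimately have "length vs \<ge> 3" by linarith
  moreover have "E (last vs) (hd vs)" using vs(2,3) sympD[OF assms(1,3)] by simp
  moreover have "\<forall>k. Suc k < length vs \<longrightarrow> E (vs ! k) (vs ! Suc k)"
    using vs(5) by (simp add: delete_edge_def)
  ultimately have "has_cycle E" unfolding has_cycle_def using vs(4) by (intro exI[of _ vs]) simp
  with assms(2) show False by blast
qed

locale undirected_tree =
  fixes E :: "'a::finite \<Rightarrow> 'a \<Rightarrow> bool"
  assumes sym_E: "symp E" and irrefl_E: "irreflp E" and tree_E: "is_tree E"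
begin

lemma adjacent_sym: "E x y \<Longrightarrow> E y x"
  using sym_E by (rule sympD)

lemma adjacent_neq: "E x y \<Longrightarrow> x \<noteq> y"
  using irrefl_E by (auto dest: irreflpD)

lemma neighbour_in_branch: "i \<noteq> j \<Longrightarrow> \<exists>m \<in> branch E j i. E j m"
  using tree_E branch_neighbour adjacent_sym by (metis connected_graph_def is_tree_def)

lemma edge_branches_disjoint:
  assumes "E j m" "x \<in> branch E m j"
  shows "x \<notin> branch E j m"
proof
  assume "x \<in> branch E j m"
  have "symp (delete_edge E j m)"
    using sym_E by (auto simp: symp_def delete_edge_def insert_commute)
  moreover have "(delete_edge E j m)\<^sup>*\<^sup>* j x" "(delete_edge E j m)\<^sup>*\<^sup>* m x"
    using assms(2) \<open>x \<in> branch E j m\<close> unfolding branch_def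
    by (auto elim!: mono_rtranclp[rule_format, rotated] simp: delete_vertex_def delete_edge_def doubleton_eq_iff)
  ultimately have "(delete_edge E j m)\<^sup>*\<^sup>* j m"
    by (meson rtranclp_trans symp_rtranclp sympD)
  then show False
    using acyclic_bridge sym_E tree_E assms(1) adjacent_neq by (metis is_tree_def)
qed

lemma separates_from_neighbour:
  assumes "E j m" "m \<in> branch E j i" "x \<in> branch E j i" "x \<noteq> m"
  shows "separates E m j x"
proof -
  have "x \<in> branch E j m" using assms(2,3) branch_eq[OF sym_E] by blast
  then have "x \<notin> branch E m j" using edge_branches_disjoint[OF assms(1)] by blast
  then show ?thesis using assms(1,4) adjacent_neq by (auto simp: separates_def)
qed

lemma branch_psubset:
  assumes "E j m" "m \<in> branch E j i" "i \<noteq> m"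
  shows "branch E m i \<subset> branch E j i"
proof -
  have "i \<in> branch E j m" using assms(2) branch_eq[OF sym_E] by (metis self_in_branch)
  then have "i \<notin> branch E m j" using edge_branches_disjoint[OF assms(1)] by blast
  then have "j \<notin> branch E m i" using branch_eq[OF sym_E] by (metis self_in_branch)
  then have "branch E m i \<subseteq> branch E j i" by (rule branch_subset)
  moreover have "m \<notin> branch E m i" using assms(3) by (rule center_notin_branch)
  ultimately show ?thesis using assms(2) by blast
qed

lemma branch_induct [case_names diag step]:
  assumes diag: "\<And>i. P i i"
    and step: "\<And>i j m. i \<noteq> j \<Longrightarrow> E j m \<Longrightarrow> m \<in> branch E j i \<Longrightarrow> P m i \<Longrightarrow> P j i"
  shows "P j i"
proof (induction "card (branch E j i)" arbitrary: j rule: less_induct)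
  case less
  show ?case
  proof (cases "i = j")
    case False
    then obtain m where m: "m \<in> branch E j i" "E j m" using neighbour_in_branch by blast
    have "P m i"
    proof (cases "i = m")
      case False
      then have "card (branch E m i) < card (branch E j i)"
        using branch_psubset m by (simp add: psubset_card_mono)
      then show ?thesis by (rule less)
    qed (use diag in simp)
    then show ?thesis using step False m by blast
  qed (use diag in simp)
qed

lemma adjacent_iff_not_separated: "E i k \<longleftrightarrow> i \<noteq> k \<and> (\<forall>j. \<not> separates E j i k)"
proof (intro iffI conjI allI)
  assume "i \<noteq> k \<and> (\<forall>j. \<not> separates E j i k)"
  moreover obtain m where "m \<in> branch E i k" "E i m" using calculation neighbour_in_branch by metis
  ultimately show "E i k" using separates_from_neighbour[of i m k k] by auto
qed (auto simp: adjacent_neq adjacent_not_separated)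

lemma neighbours_separated:
  assumes "E j a" "E j c" "a \<noteq> c"
  shows "separates E j a c"
proof -
  have "c \<in> branch E a j"
    using branch_closed[of j a j E c] assms adjacent_neq by auto
  then have "c \<notin> branch E j a" by (rule edge_branches_disjoint[OF assms(1)])
  then show ?thesis using assms adjacent_neq by (auto simp: separates_def)
qed

lemma separator_has_two_neighbours:
  assumes "separates E j i k"
  shows "\<exists>a c. a \<noteq> c \<and> E j a \<and> E j c"
proof -
  have "i \<noteq> j" "k \<noteq> j" "k \<notin> branch E j i" using assms by (auto simp: separates_def)
  moreover obtain a c where "a \<in> branch E j i" "E j a" "c \<in> branch E j k" "E j c"
    using calculation neighbour_in_branch by metis
  ultimately show ?thesis using branch_eq[OF sym_E] by (metis self_in_branch)
qed

lemma leaf_if_not_inner: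
  assumes "i \<noteq> j" "\<not> inner_vertex E j"
  shows "j \<in> leaves E"
proof -
  obtain m where "E j m" using neighbour_in_branch[OF assms(1)] by blast
  moreover have "y = m" if "E j y" for y
    using neighbours_separated[OF \<open>E j m\<close> that] assms(2) by (auto simp: inner_vertex_def)
  ultimately have "{y. E j y} = {m}" by blast
  then show ?thesis by (simp add: leaves_def)
qed

end

section \<open>Covariance matrices with tree-structured precision matrix\<close>

lemma cov_factorization:
  fixes S :: "real^'n^'n"
  assumes "pos_def S" "i \<in> A" "j \<notin> A" "k \<notin> A"
    and "\<And>x y. x \<in> A \<Longrightarrow> y \<notin> A \<Longrightarrow> y \<noteq> j \<Longrightarrow> matrix_inv S $ x $ y = 0"
  shows "S$i$k * S$j$j = S$i$j * S$j$k"
proof -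
  (* w = S c vanishes at j, and matrix_inv S *v w = c vanishes on A *)
  define c :: "real^'n" where "c = S$j$j *\<^sub>R axis k 1 - S$j$k *\<^sub>R axis j 1"
  define w where "w = S *v c"
  have w: "w $ x = S$x$k * S$j$j - S$x$j * S$j$k" for x
    by (simp add: w_def c_def matrix_vector_mult_basis column_def algebra_simps)
  have "matrix_inv S *v w = c"
    by (simp add: w_def matrix_vector_mul_assoc pos_def_mult_matrix_inv(2)[OF assms(1)])
  then have "(matrix_inv S *v w) $ x = 0" if "x \<in> A" for x
    using that assms(3,4) by (auto simp: c_def axis_def)
  moreover have "matrix_inv S $ x $ y * w $ y = 0" if "x \<in> A" "y \<notin> A" for x y
    using assms(5)[OF that] w[of j] by (cases "y = j") auto
  ultimately have "w $ i = 0"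
    using pos_def_restriction_eq_0[OF pos_def_matrix_inv[OF assms(1)]] assms(2) by blast
  then show ?thesis using w[of i] by simp
qed

lemma matrix_inv_eq_0_if_block_diag:
  fixes S :: "real^'n^'n"
  assumes "pos_def S" "a \<in> A" "b \<notin> A" "\<And>x y. x \<in> A \<Longrightarrow> y \<notin> A \<Longrightarrow> S $ x $ y = 0"
  shows "matrix_inv S $ a $ b = 0"
proof -
  define u where "u = matrix_inv S *v axis b 1"
  have Su: "S *v u = axis b 1"
    by (simp add: u_def matrix_vector_mul_assoc pos_def_mult_matrix_inv(1)[OF assms(1)])
  have "u $ a = 0"
  proof (rule pos_def_restriction_eq_0[OF assms(1)])
    show "(S *v u) $ x = 0" if "x \<in> A" for x
      using Su that assms(3) by (auto simp: axis_def)
    show "S $ x $ y * u $ y = 0" if "x \<in> A" "y \<notin> A" for x y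
      using assms(4)[OF that] by simp
  qed (rule assms(2))
  then show ?thesis by (simp add: u_def matrix_vector_mult_basis column_def)
qed

lemma cov_separates:
  fixes S :: "real^'n^'n"
  assumes "pos_def S" "separates (ci_graph S) j i k"
  shows "S$i$k * S$j$j = S$i$j * S$j$k"
proof (rule cov_factorization[OF assms(1), where A = "branch (ci_graph S) j i"])
  have "i \<noteq> j" using assms(2) by (simp add: separates_def)
  show "i \<in> branch (ci_graph S) j i" by simp
  show "j \<notin> branch (ci_graph S) j i" using \<open>i \<noteq> j\<close> by (rule center_notin_branch)
  show "k \<notin> branch (ci_graph S) j i" using assms(2) by (simp add: separates_def)
  show "matrix_inv S $ x $ y = 0"
    if "x \<in> branch (ci_graph S) j i" "y \<notin> branch (ci_graph S) j i" "y \<noteq> j" for x y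
  proof (rule ccontr)
    assume "matrix_inv S $ x $ y \<noteq> 0"
    then have "ci_graph S x y" using that(1,2) by (auto simp: ci_graph_def)
    then show False using branch_closed[OF \<open>i \<noteq> j\<close> that(1)] that(2,3) by blast
  qed
qed

lemma leaf_inv_diag:
  fixes S :: "real^'n^'n"
  assumes "pos_def S" "{y. ci_graph S j y} = {b}"
  shows "1 / matrix_inv S $ j $ j = S$j$j - (S$j$b)^2 / S$b$b"
proof -
  (* the conditional variance of j given all other vertices only depends on its neighbour b *)
  let ?\<Omega> = "matrix_inv S"
  have "j \<noteq> b" using assms(2) by (auto simp: ci_graph_def)
  have "?\<Omega> $ x $ j = 0" if "x \<noteq> j" "x \<noteq> b" for x
    using assms(2) that pos_def_sym[OF pos_def_matrix_inv[OF assms(1)], of x j]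
    by (auto simp: ci_graph_def)
  then have col: "(S ** ?\<Omega>) $ x $ j = S$x$j * ?\<Omega>$j$j + S$x$b * ?\<Omega>$b$j" for x
    unfolding matrix_matrix_mult_def using \<open>j \<noteq> b\<close>
    by (simp, subst sum.mono_neutral_right[of UNIV "{j, b}"]) auto
  have "S$j$j * ?\<Omega>$j$j + S$j$b * ?\<Omega>$b$j = 1" "S$b$j * ?\<Omega>$j$j + S$b$b * ?\<Omega>$b$j = 0"
    using col[of j] col[of b] pos_def_mult_matrix_inv(1)[OF assms(1)] \<open>j \<noteq> b\<close> by (simp_all add: mat_def)
  then have "?\<Omega>$j$j * (S$j$j * S$b$b - (S$j$b)^2) = S$b$b"
    using pos_def_sym[OF assms(1), of b j] by (simp add: power2_eq_square) algebra
  then show ?thesis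
    using pos_def_diag_pos[OF assms(1), of b] pos_def_diag_pos[OF pos_def_matrix_inv[OF assms(1)], of j]
    by (simp add: field_simps)
qed

lemma abs_mult_le_through:
  fixes a b c d p q r :: real
  assumes "d > 0" "a * d = c * p" "b * d = c * q" "\<bar>p * q\<bar> \<le> d * r"
  shows "\<bar>a * b\<bar> * d \<le> c^2 * r"
proof -
  have "\<bar>a * b\<bar> * d * d = \<bar>a * d\<bar> * \<bar>b * d\<bar>" using assms(1) by (simp add: abs_mult)
  also have "\<dots> = c^2 * \<bar>p * q\<bar>" using assms(2,3) by (simp add: abs_mult power2_eq_square)
  also have "\<dots> \<le> c^2 * (d * r)" using assms(4) by (simp add: mult_left_mono)
  finally show ?thesis using assms(1) by (simp add: mult.assoc mult.left_commute)
qed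

locale tree_covariance =
  fixes S :: "real^'n^'n"
  assumes pos_def_S: "pos_def S" and tree_S: "is_tree (ci_graph S)"

sublocale tree_covariance \<subseteq> undirected_tree "ci_graph S"
  using tree_S pos_def_sym[OF pos_def_matrix_inv[OF pos_def_S]]
  by unfold_locales (auto simp: symp_def irreflp_def ci_graph_def)

context tree_covariance
begin

lemma cov_edge_nonzero:
  assumes "ci_graph S a b"
  shows "S$a$b \<noteq> 0"
proof
  (* Factoring through a and b makes S block diagonal with respect to the two sides of the edge. *)
  assume ab: "S$a$b = 0"
  let ?A = "branch (ci_graph S) b a"
  have "a \<noteq> b" using assms by (rule adjacent_neq)
  have b_side: "S$x$b = 0" if "x \<in> ?A" for x
  proof (cases "x = a")
    case False
    have "x \<notin> branch (ci_graph S) a b" using edge_branches_disjoint[OF assms that] .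
    then have "b \<notin> branch (ci_graph S) a x" using branch_eq[OF sym_E] self_in_branch by metis
    then have "separates (ci_graph S) a x b" using False \<open>a \<noteq> b\<close> by (simp add: separates_def)
    then have "S$x$b * S$a$a = 0" using cov_separates[OF pos_def_S] ab by simp
    then show ?thesis using pos_def_diag_pos[OF pos_def_S, of a] by simp
  qed (use ab in simp)
  have "S$x$y = 0" if "x \<in> ?A" "y \<notin> ?A" for x y
  proof (cases "y = b")
    case False
    have "x \<noteq> b" using that(1) center_notin_branch \<open>a \<noteq> b\<close> by metis
    moreover have "y \<notin> branch (ci_graph S) b x" using that branch_eq[OF sym_E] by blast
    ultimately have "separates (ci_graph S) b x y" using False by (simp add: separates_def)
    then have "S$x$y * S$b$b = 0" using cov_separates[OF pos_def_S] b_side[OF that(1)] by simp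
    then show ?thesis using pos_def_diag_pos[OF pos_def_S, of b] by simp
  qed (use b_side that in simp)
  then have "matrix_inv S $ a $ b = 0"
    using matrix_inv_eq_0_if_block_diag[OF pos_def_S, of a ?A b] center_notin_branch[OF \<open>a \<noteq> b\<close>]
    by auto
  then show False using assms by (simp add: ci_graph_def)
qed

lemma cov_nonzero: "S$j$i \<noteq> 0"
proof (induction j i rule: branch_induct)
  case (diag i)
  show ?case using pos_def_diag_pos[OF pos_def_S, of i] by simp
next
  case (step i j m)
  show ?case
  proof (cases "i = m")
    case False
    then have "separates (ci_graph S) m j i" using separates_from_neighbour[OF step(2,3)] by simp
    then have "S$j$i * S$m$m = S$j$m * S$m$i" by (rule cov_separates[OF pos_def_S])
    then show ?thesis
      using step.IH cov_edge_nonzero[OF step(2)] pos_def_diag_pos[OF pos_def_S, of m] by auto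
  qed (use cov_edge_nonzero step(2) in simp)
qed

lemma cov_separates_abs:
  assumes "separates (ci_graph S) j i k"
  shows "\<bar>S$i$j * S$j$k\<bar> = S$j$j * \<bar>S$i$k\<bar>"
proof -
  have "S$i$j * S$j$k = S$i$k * S$j$j" using cov_separates[OF pos_def_S assms] by simp
  then show ?thesis using pos_def_diag_pos[OF pos_def_S, of j] by (simp add: abs_mult)
qed

lemma cov_bound_step:
  assumes "ci_graph S j m" "m \<in> branch (ci_graph S) j i" "k \<in> branch (ci_graph S) j i"
    and "\<bar>S$i$m * S$m$k\<bar> \<le> S$m$m * \<bar>S$i$k\<bar>"
  shows "\<bar>S$i$j * S$j$k\<bar> < S$j$j * \<bar>S$i$k\<bar>"
proof -
  have factor: "S$j$x * S$m$m = S$j$m * S$m$x" if "x \<in> branch (ci_graph S) j i" for x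
  proof (cases "x = m")
    case False
    show ?thesis
      by (rule cov_separates[OF pos_def_S separates_from_neighbour[OF assms(1,2) that False]])
  qed simp
  have "S$i$j = S$j$i" "S$i$m = S$m$i" "S$m$m > 0"
    using pos_def_S by (simp_all add: pos_def_sym pos_def_diag_pos)
  then have "\<bar>S$i$j * S$j$k\<bar> * S$m$m \<le> (S$j$m)^2 * \<bar>S$i$k\<bar>"
    using factor[of i] factor[OF assms(3)] assms(4)
    by (intro abs_mult_le_through[where p = "S$m$i" and q = "S$m$k"]) simp_all
  also have "\<dots> < (S$j$j * \<bar>S$i$k\<bar>) * S$m$m"
    using pos_def_offdiag_sq_less[OF pos_def_S adjacent_neq[OF assms(1)]] cov_nonzero[of i k]
    by (simp add: mult.commute mult.left_commute)
  finally show ?thesis using \<open>S$m$m > 0\<close> by simp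
qed

lemma cov_bound: "\<bar>S$i$j * S$j$k\<bar> \<le> S$j$j * \<bar>S$i$k\<bar>"
proof (induction j i arbitrary: k rule: branch_induct)
  case (diag i)
  show ?case using pos_def_diag_pos[OF pos_def_S, of i] by (simp add: abs_mult)
next
  case (step i j m)
  consider "k \<in> branch (ci_graph S) j i" | "k = j" | "separates (ci_graph S) j i k"
    using step(1) by (auto simp: separates_def)
  then show ?case
  proof cases
    case 1
    then show ?thesis using cov_bound_step[OF step(2,3) 1 step.IH] by simp
  next
    case 2
    then show ?thesis using pos_def_diag_pos[OF pos_def_S, of j] by (simp add: abs_mult mult.commute)
  next
    case 3
    then show ?thesis by (simp add: cov_separates_abs)
  qed
qed

lemma separates_iff_cov_eq:
  assumes "i \<noteq> j" "k \<noteq> j"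
  shows "separates (ci_graph S) j i k \<longleftrightarrow> \<bar>S$i$j * S$j$k\<bar> = S$j$j * \<bar>S$i$k\<bar>"
proof
  assume eq: "\<bar>S$i$j * S$j$k\<bar> = S$j$j * \<bar>S$i$k\<bar>"
  show "separates (ci_graph S) j i k"
  proof (rule ccontr)
    assume "\<not> separates (ci_graph S) j i k"
    then have k: "k \<in> branch (ci_graph S) j i" using assms by (simp add: separates_def)
    obtain m where "ci_graph S j m" "m \<in> branch (ci_graph S) j i"
      using neighbour_in_branch[OF assms(1)] by blast
    from cov_bound_step[OF this k cov_bound] eq show False by simp
  qed
qed (rule cov_separates_abs)

end

section \<open>Two tree covariances with the same off-diagonal entries\<close>

locale tree_covariance_pair = S1: tree_covariance S1 + S2: tree_covariance S2
  for S1 S2 :: "real^'n^'n" +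
  assumes offdiag_eq: "x \<noteq> y \<Longrightarrow> S1 $ x $ y = S2 $ x $ y"
begin

lemma swap: "tree_covariance_pair S2 S1"
  using S1.tree_covariance_axioms S2.tree_covariance_axioms offdiag_eq
  by (simp add: tree_covariance_pair_def tree_covariance_pair_axioms_def)

lemma diag_le_if_separates:
  assumes "separates (ci_graph S1) j a c"
  shows "S1$j$j \<le> S2$j$j"
proof -
  have "a \<noteq> j" "c \<noteq> j" "a \<noteq> c" using assms by (auto simp: separates_def)
  have "S1$j$j * \<bar>S1$a$c\<bar> = \<bar>S1$a$j * S1$j$c\<bar>" using S1.cov_separates_abs[OF assms] by simp
  also have "\<dots> = \<bar>S2$a$j * S2$j$c\<bar>" using offdiag_eq \<open>a \<noteq> j\<close> \<open>c \<noteq> j\<close> by simp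
  also have "\<dots> \<le> S2$j$j * \<bar>S2$a$c\<bar>" by (rule S2.cov_bound)
  also have "\<dots> = S2$j$j * \<bar>S1$a$c\<bar>" using offdiag_eq \<open>a \<noteq> c\<close> by simp
  finally show ?thesis using S1.cov_nonzero[of a c] by simp
qed

lemma diag_eq_if_inner:
  assumes "inner_vertex (ci_graph S1) j" "inner_vertex (ci_graph S2) j"
  shows "S1$j$j = S2$j$j"
proof -
  obtain a c where "separates (ci_graph S1) j a c"
    using assms(1) unfolding inner_vertex_def by blast
  moreover obtain a' c' where "separates (ci_graph S2) j a' c'"
    using assms(2) unfolding inner_vertex_def by blast
  ultimately show ?thesis
    using diag_le_if_separates tree_covariance_pair.diag_le_if_separates[OF swap] by force
qed

lemma separates_iff_if_diag_eq:
  assumes "S1$j$j = S2$j$j"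
  shows "separates (ci_graph S1) j i k \<longleftrightarrow> separates (ci_graph S2) j i k"
proof (cases "i = j \<or> k = j \<or> i = k")
  case False
  then show ?thesis
    using S1.separates_iff_cov_eq S2.separates_iff_cov_eq assms offdiag_eq by simp
qed (auto simp: separates_def)

lemma leaf_diag_gap:
  assumes "j \<in> leaves (ci_graph S1)" "separates (ci_graph S2) j a c"
  shows "1 / matrix_inv S1 $ j $ j \<le> S1$j$j - S2$j$j"
proof -
  obtain b where b: "{y. ci_graph S1 j y} = {b}"
    using assms(1) by (auto simp: leaves_def card_1_singleton_iff)
  have "j \<noteq> b" using b S1.adjacent_neq by blast
  have "a \<noteq> j" "c \<noteq> j" "a \<noteq> c" using assms(2) by (auto simp: separates_def)
  have factor: "S1$j$x * S1$b$b = S1$j$b * S1$b$x" if "x \<noteq> j" for x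
  proof (cases "x = b")
    case False
    have "separates (ci_graph S1) b j x"
      using leaf_separates[of "ci_graph S1" j b x] b \<open>j \<noteq> b\<close> that False by blast
    then show ?thesis by (rule cov_separates[OF S1.pos_def_S])
  qed simp
  have bb: "S1$b$b > 0" using S1.pos_def_S by (rule pos_def_diag_pos)
  have "S2$j$j * \<bar>S1$a$c\<bar> * S1$b$b = \<bar>S1$j$a * S1$j$c\<bar> * S1$b$b"
    using S2.cov_separates_abs[OF assms(2)] offdiag_eq \<open>a \<noteq> j\<close> \<open>c \<noteq> j\<close> \<open>a \<noteq> c\<close>
      pos_def_sym[OF S1.pos_def_S, of a j] by simp
  also have "\<dots> \<le> (S1$j$b)^2 * \<bar>S1$a$c\<bar>"
    using factor[OF \<open>a \<noteq> j\<close>] factor[OF \<open>c \<noteq> j\<close>] S1.cov_bound[of a b c] bb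
      pos_def_sym[OF S1.pos_def_S, of a b]
    by (intro abs_mult_le_through[where p = "S1$b$a" and q = "S1$b$c"]) simp_all
  finally have "S2$j$j \<le> (S1$j$b)^2 / S1$b$b"
    using S1.cov_nonzero[of a c] bb by (simp add: field_simps)
  then show ?thesis using leaf_inv_diag[OF S1.pos_def_S b] by simp
qed

lemma inner_vertex_transfer:
  assumes inner_S2_imp_S1: "\<And>v. inner_vertex (ci_graph S2) v \<Longrightarrow> inner_vertex (ci_graph S1) v"
    and "inner_vertex (ci_graph S1) j"
  shows "inner_vertex (ci_graph S2) j"
proof (rule ccontr)
  assume not_inner: "\<not> inner_vertex (ci_graph S2) j"
  obtain i k where sep: "separates (ci_graph S1) j i k"
    using assms(2) unfolding inner_vertex_def by blast
  then have "i \<noteq> j" by (simp add: separates_def)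
  with not_inner have "j \<in> leaves (ci_graph S2)" by (rule S2.leaf_if_not_inner[rotated])
  then obtain c where c: "{y. ci_graph S2 j y} = {c}"
    by (auto simp: leaves_def card_1_singleton_iff)
  then have only_c: "\<And>y. ci_graph S2 j y \<Longrightarrow> y = c" and "ci_graph S2 j c" by auto
  from \<open>ci_graph S2 j c\<close> have "j \<noteq> c" by (rule S2.adjacent_neq)
  obtain a a' where "a \<noteq> a'" "ci_graph S1 j a" "ci_graph S1 j a'"
    using S1.separator_has_two_neighbours[OF sep] by blast
  then obtain a where a: "ci_graph S1 j a" "a \<noteq> c" by blast
  have "a \<noteq> j" using a(1) by (rule S1.adjacent_neq[symmetric])
  have sep2: "separates (ci_graph S2) c j a"
    by (rule leaf_separates[OF only_c \<open>j \<noteq> c\<close> \<open>a \<noteq> j\<close> a(2)])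
  then have "inner_vertex (ci_graph S2) c" unfolding inner_vertex_def by blast
  moreover from this have "inner_vertex (ci_graph S1) c" by (rule inner_S2_imp_S1)
  ultimately have "S1$c$c = S2$c$c" by (intro diag_eq_if_inner)
  with sep2 have "separates (ci_graph S1) c j a" by (simp add: separates_iff_if_diag_eq)
  then show False using adjacent_not_separated[of "ci_graph S1" j a c] a(1) by blast
qed

lemma ci_graph_eq_if_inner_vertices_eq:
  assumes inner_eq: "\<And>v. inner_vertex (ci_graph S1) v \<longleftrightarrow> inner_vertex (ci_graph S2) v"
  shows "ci_graph S1 = ci_graph S2"
proof -
  have separates_eq: "separates (ci_graph S1) j i k \<longleftrightarrow> separates (ci_graph S2) j i k" for i j k
  proof (cases "inner_vertex (ci_graph S1) j")
    case True
    then have "S1$j$j = S2$j$j" using diag_eq_if_inner inner_eq by blast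
    then show ?thesis by (rule separates_iff_if_diag_eq)
  next
    case False
    then have "\<not> inner_vertex (ci_graph S2) j" using inner_eq by blast
    with False show ?thesis unfolding inner_vertex_def by blast
  qed
  show ?thesis
  proof (intro ext)
    show "ci_graph S1 i k = ci_graph S2 i k" for i k
      using S1.adjacent_iff_not_separated[of i k] S2.adjacent_iff_not_separated[of i k] separates_eq
      by presburger
  qed
qed

end

theorem theorem3:
  fixes S_star D_star S' D' :: "real^'n^'n"
  assumes pd_star: "pos_def S_star"
    and tree_star: "is_tree (ci_graph S_star)"
    and D_star_diag: "diag_mat D_star"
    and D_star_nonneg: "\<forall>i. D_star $ i $ i \<ge> 0"
    and D_star_leaf: "\<forall>a \<in> leaves (ci_graph S_star). D_star $ a $ a < 1 / (matrix_inv S_star $ a $ a)"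
    and pd': "pos_def S'"
    and tree': "is_tree (ci_graph S')"
    and D'_diag: "diag_mat D'"
    and D'_nonneg: "\<forall>i. D' $ i $ i \<ge> 0"
    and D'_leaf: "\<forall>a \<in> leaves (ci_graph S_star). D' $ a $ a < 1 / (matrix_inv S_star $ a $ a)"
    and decomp: "S_star + D_star = S' + D'"
  shows "ci_graph S' = ci_graph S_star"
proof -
  have entries: "S_star $ x $ y + D_star $ x $ y = S' $ x $ y + D' $ x $ y" for x y
    using arg_cong[OF decomp, of "\<lambda>M. M $ x $ y"] by simp
  interpret tree_covariance_pair S_star S'
  proof unfold_locales
    show "S_star $ x $ y = S' $ x $ y" if "x \<noteq> y" for x y
      using entries[of x y] D_star_diag D'_diag that by (simp add: diag_mat_def)
  qed (fact pd_star tree_star pd' tree')+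
  have inner_star_if_inner': "inner_vertex (ci_graph S_star) j"
    if inner': "inner_vertex (ci_graph S') j" for j
  proof (rule ccontr)
    assume "\<not> inner_vertex (ci_graph S_star) j"
    moreover obtain a c where sep: "separates (ci_graph S') j a c"
      using inner' by (auto simp: inner_vertex_def)
    ultimately have leaf: "j \<in> leaves (ci_graph S_star)"
      by (intro S1.leaf_if_not_inner[of a]) (simp_all add: separates_def)
    have "1 / matrix_inv S_star $ j $ j \<le> S_star$j$j - S'$j$j" by (rule leaf_diag_gap[OF leaf sep])
    also have "\<dots> \<le> D'$j$j" using entries[of j j] D_star_nonneg by (metis le_add_same_cancel2 diff_le_eq add.commute)
    finally show False using D'_leaf leaf by (simp add: not_le[symmetric])
  qed
  then have "inner_vertex (ci_graph S_star) j \<longleftrightarrow> inner_vertex (ci_graph S') j" for j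
    using inner_vertex_transfer by blast
  then show ?thesis using ci_graph_eq_if_inner_vertices_eq by simp
qed

end
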